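(* Let $G$ be the discrete Heisenberg group of upper unitriangular $3\times3$ integer matrices $\begin{pmatrix}1&a&b\\0&1&c\\0&0&1\end{pmatrix}$, $a,b,c\in\mathbb Z$, and let $A$ be its center $\{a=c=0\}$, identified with $\mathbb Z$ via the entry $b$. Let $d(b_1,b_2)=|b_1-b_2|$ on $A$. Then there is no left invariant metric $\underline d$ on $G$ with $\underline d|_A=d$ (in particular no two-sided invariant one). *)

theory Defs
  imports Complex_Main
begin

text \<open>The discrete Heisenberg group: the matrix with entries a (1,2), b (1,3), c (2,3)
  is represented by the triple (a, b, c) of integers.\<close>

type_synonym heis = "int \<times> int \<times> int"

text \<open>Matrix multiplication of upper unitriangular 3x3 integer matrices.\<close>
definition heis_mult :: "heis \<Rightarrow> heis \<Rightarrow> heis" where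
  "heis_mult g h = (case g of (a, b, c) \<Rightarrow> case h of (a', b', c') \<Rightarrow>
      (a + a', b + b' + a * c', c + c'))"

definition heis_center :: "int \<Rightarrow> heis" where
  "heis_center b = (0, b, 0)"

definition is_metric :: "('a \<Rightarrow> 'a \<Rightarrow> real) \<Rightarrow> bool" where
  "is_metric D \<longleftrightarrow>
     (\<forall>x y. D x y \<ge> 0) \<and>
     (\<forall>x y. D x y = 0 \<longleftrightarrow> x = y) \<and>
     (\<forall>x y. D x y = D y x) \<and>
     (\<forall>x y z. D x z \<le> D x y + D y z)"

definition left_invariant :: "(heis \<Rightarrow> heis \<Rightarrow> real) \<Rightarrow> bool" where
  "left_invariant D \<longleftrightarrow> (\<forall>g x y. D (heis_mult g x) (heis_mult g y) = D x y)"

end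

theory Submission
  imports Defs
begin

(* A left-invariant metric D on the Heisenberg group G induces a length
   |g| = D(1, g) which is subadditive, |gh| <= |g| + |h|, and symmetric, |g^-1| = |g|.
   Hence along the one-parameter subgroups x^n = (n,0,0) and y^n = (0,0,n) the length grows
   at most linearly in n, and a commutator satisfies |[g,h]| <= 2|g| + 2|h|.  But the
   commutator [x^n, y^n] is the central element (0, n^2, 0), whose length is n^2 if D
   restricts to the standard metric on the center.  So n^2 <= 2n(|x| + |y|) for all n,
   which fails for large n. *)

definition heis_unit :: heis where
  "heis_unit = (0, 0, 0)"

definition heis_inv :: "heis \<Rightarrow> heis" where
  "heis_inv g = (case g of (a, b, c) \<Rightarrow> (- a, a * c - b, - c))"

lemma heis_mult_unit_right: "heis_mult g heis_unit = g"
  by (cases g) (simp add: heis_mult_def heis_unit_def)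

lemma heis_mult_inv_right: "heis_mult g (heis_inv g) = heis_unit"
  by (cases g) (simp add: heis_mult_def heis_inv_def heis_unit_def algebra_simps)

text \<open>The commutator of the n-th powers of the generators x = (1,0,0) and y = (0,0,1)
  is the central element n^2; this is the source of the quadratic growth.\<close>

lemma heis_commutator_generator_powers:
  "heis_mult (heis_mult (heis_mult (n, 0, 0) (0, 0, n)) (heis_inv (n, 0, 0))) (heis_inv (0, 0, n))
     = heis_center (n * n)"
  by (simp add: heis_mult_def heis_inv_def heis_center_def)

definition heis_length :: "(heis \<Rightarrow> heis \<Rightarrow> real) \<Rightarrow> heis \<Rightarrow> real" where
  "heis_length D g = D heis_unit g"

lemma left_invariant_dist_mult:
  assumes "left_invariant D"
  shows "D g (heis_mult g h) = heis_length D h"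
  using assms heis_mult_unit_right[of g]
  unfolding left_invariant_def heis_length_def by metis

lemma heis_length_unit:
  assumes "is_metric D"
  shows "heis_length D heis_unit = 0"
  using assms unfolding is_metric_def heis_length_def by blast

text \<open>Subadditivity: the triangle inequality through the intermediate point g.\<close>

lemma heis_length_mult_le:
  assumes "is_metric D" and "left_invariant D"
  shows "heis_length D (heis_mult g h) \<le> heis_length D g + heis_length D h"
proof -
  have "D heis_unit (heis_mult g h) \<le> D heis_unit g + D g (heis_mult g h)"
    using assms(1) unfolding is_metric_def by blast
  then show ?thesis
    using left_invariant_dist_mult[OF assms(2)] by (simp add: heis_length_def)
qed

text \<open>Symmetry: |g^-1| = D(1, g^-1) = D(g, 1) = |g| by left invariance and symmetry of D.\<close>

lemma heis_length_inv:
  assumes "is_metric D" and "left_invariant D"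
  shows "heis_length D (heis_inv g) = heis_length D g"
proof -
  have "heis_length D (heis_inv g) = D g heis_unit"
    using left_invariant_dist_mult[OF assms(2), of g "heis_inv g"]
    by (simp add: heis_mult_inv_right)
  also have "\<dots> = heis_length D g"
    using assms(1) unfolding is_metric_def heis_length_def by metis
  finally show ?thesis .
qed

lemma heis_length_power_le:
  assumes "is_metric D" and "left_invariant D"
    and "p 0 = heis_unit" and "\<And>k. p (Suc k) = heis_mult (p k) g"
  shows "heis_length D (p n) \<le> real n * heis_length D g"
proof (induction n)
  case 0
  then show ?case using heis_length_unit[OF assms(1)] assms(3) by simp
next
  case (Suc n)
  have "heis_length D (p (Suc n)) \<le> heis_length D (p n) + heis_length D g"
    using heis_length_mult_le[OF assms(1,2)] assms(4) by simp
  then show ?case using Suc.IH by (simp add: algebra_simps)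
qed

lemma heis_length_commutator_le:
  assumes "is_metric D" and "left_invariant D"
  shows "heis_length D (heis_mult (heis_mult (heis_mult g h) (heis_inv g)) (heis_inv h))
           \<le> 2 * heis_length D g + 2 * heis_length D h"
  using heis_length_mult_le[OF assms, of g h]
    heis_length_mult_le[OF assms, of "heis_mult g h" "heis_inv g"]
    heis_length_mult_le[OF assms, of "heis_mult (heis_mult g h) (heis_inv g)" "heis_inv h"]
    heis_length_inv[OF assms, of g] heis_length_inv[OF assms, of h]
  by linarith

lemma quadratic_not_linearly_bounded:
  "\<not> (\<forall>n::nat. real n * real n \<le> real n * c)"
proof
  assume bound: "\<forall>n::nat. real n * real n \<le> real n * c"
  obtain n :: nat where n: "real n > max c 0"
    using reals_Archimedean2 by blast
  then have "real n \<le> c"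
    using bound mult_le_cancel_left_pos[of "real n" "real n" c] by simp
  then show False using n by simp
qed

theorem mainTheorem9:
  shows "\<not> (\<exists>D :: heis \<Rightarrow> heis \<Rightarrow> real.
            is_metric D \<and> left_invariant D \<and>
            (\<forall>b1 b2. D (heis_center b1) (heis_center b2) = real_of_int \<bar>b1 - b2\<bar>))"
proof
  assume "\<exists>D :: heis \<Rightarrow> heis \<Rightarrow> real.
            is_metric D \<and> left_invariant D \<and>
            (\<forall>b1 b2. D (heis_center b1) (heis_center b2) = real_of_int \<bar>b1 - b2\<bar>)"
  then obtain D :: "heis \<Rightarrow> heis \<Rightarrow> real" where
    metric: "is_metric D" and invariant: "left_invariant D" and
    center: "\<forall>b1 b2. D (heis_center b1) (heis_center b2) = real_of_int \<bar>b1 - b2\<bar>"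
    by blast
  let ?c = "2 * heis_length D (1, 0, 0) + 2 * heis_length D (0, 0, 1)"
  have "real n * real n \<le> real n * ?c" for n :: nat
  proof -
    have x_power: "heis_length D (int n, 0, 0) \<le> real n * heis_length D (1, 0, 0)"
      by (rule heis_length_power_le[OF metric invariant, where p = "\<lambda>k. (int k, 0, 0)"])
         (simp_all add: heis_unit_def heis_mult_def)
    have y_power: "heis_length D (0, 0, int n) \<le> real n * heis_length D (0, 0, 1)"
      by (rule heis_length_power_le[OF metric invariant, where p = "\<lambda>k. (0, 0, int k)"])
         (simp_all add: heis_unit_def heis_mult_def)
    have "real n * real n = heis_length D (heis_center (int n * int n))"
      using center[rule_format, of 0 "int n * int n"]
      by (simp add: heis_length_def heis_unit_def heis_center_def)
    also have "\<dots> \<le> 2 * heis_length D (int n, 0, 0) + 2 * heis_length D (0, 0, int n)"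
      using heis_length_commutator_le[OF metric invariant]
      by (simp only: heis_commutator_generator_powers[symmetric])
    also have "\<dots> \<le> real n * ?c"
      using x_power y_power by (simp add: algebra_simps)
    finally show ?thesis .
  qed
  then show False using quadratic_not_linearly_bounded by blast
qed

end
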